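(* Let $x_1 \in X$ and stepsizes $\gamma_k > 0$ be given, and for $k \ge 1$ let \[ y_k = P_{x_k}(\gamma_k F(x_k)), \qquad x_{k+1} = P_{x_k}(\gamma_k F(y_k)). \] Then: (a) There exists $x^* \in X^*$ such that \[ -\frac{\gamma_k^2}{2\alpha}\|F(x_k) - F(y_k)\|_*^2 + V(x_k, y_k) \le V(x_k, x^* ) - V(x_{k+1}, x^* ). \] (b) If $F$ is Hölder continuous, i.e. $\|F(x) - F(y)\|_* \le L\|x-y\|^\nu$ for all $x, y\in X$ for some $L>0$ and $\nu \in (0,1]$, then there exists $x^* \in X^*$ such that \[ V(x_k,y_k) - 2^{\nu-1}L^2\gamma_k^2\alpha^{-(1+\nu)}\left[V(x_k,y_k)\right]^\nu \le V(x_k,x^* ) - V(x_{k+1},x^* ). \] In particular, if $F$ is Lipschitz continuous ($\nu = 1$), then \[ \left(1 - L^2\gamma_k^2\alpha^{-2}\right)V(x_k,y_k) \le V(x_k,x^* ) - V(x_{k+1},x^* ). \]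
   Context: $\mathbb{R}^n$ carries an inner product $\langle\cdot,\cdot\rangle$ and a norm $\|\cdot\|$ (not necessarily induced by the inner product), with dual norm $\|\cdot\|_*$. $X \subseteq \mathbb{R}^n$ is a nonempty closed convex set and $F: X \to \mathbb{R}^n$ is continuous. $X^*$ is the set of strong solutions of $\mathrm{VI}(X,F)$ (points $x^*\in X$ with $\langle F(x^* ), x - x^*\rangle \ge 0$ for all $x\in X$); it is assumed nonempty, and it is assumed (generalized monotonicity) that for every $x^* \in X^*$, $\langle F(x), x - x^*\rangle \ge 0$ for all $x \in X$. A distance generating function with modulus $\alpha>0$ w.r.t. $\|\cdot\|$ is a function $\omega: X \to \mathbb{R}$ that is convex and continuous on $X$, such that $X^o = \{x \in X : \partial\omega(x) \neq \emptyset\}$ is convex, and such that $\omega$ restricted to $X^o$ is continuously differentiable and satisfies $\langle \nabla\omega(x') - \nabla\omega(x), x' - x\rangle \ge \alpha\|x'-x\|^2$ for all $x, x' \in X^o$. Fix such an $\omega$. $V(x,z) = \omega(z) - \omega(x) - \langle \nabla\omega(x), z - x\rangle$ and $P_x(\phi) = \arg\min_{z \in X}\{\langle \phi, z\rangle + V(x,z)\}$. *)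

theory Defs
  imports "HOL-Analysis.Analysis"
begin

definition is_norm :: "('a::euclidean_space \<Rightarrow> real) \<Rightarrow> bool" where
  "is_norm N \<longleftrightarrow> (\<forall>x. 0 \<le> N x) \<and> (\<forall>x. N x = 0 \<longleftrightarrow> x = 0)
     \<and> (\<forall>c x. N (c *\<^sub>R x) = \<bar>c\<bar> * N x) \<and> (\<forall>x y. N (x + y) \<le> N x + N y)"

definition dual_norm :: "('a::euclidean_space \<Rightarrow> real) \<Rightarrow> 'a \<Rightarrow> real" where
  "dual_norm N \<phi> = Sup {\<phi> \<bullet> x | x. N x \<le> 1}"

definition subdiff :: "'a::euclidean_space set \<Rightarrow> ('a \<Rightarrow> real) \<Rightarrow> 'a \<Rightarrow> 'a set" where
  "subdiff X \<omega> x = {g. \<forall>z\<in>X. \<omega> x + g \<bullet> (z - x) \<le> \<omega> z}"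

definition dgf_dom :: "'a::euclidean_space set \<Rightarrow> ('a \<Rightarrow> real) \<Rightarrow> 'a set" where
  "dgf_dom X \<omega> = {x\<in>X. subdiff X \<omega> x \<noteq> {}}"

definition is_dgf :: "'a::euclidean_space set \<Rightarrow> ('a \<Rightarrow> real) \<Rightarrow> ('a \<Rightarrow> real) \<Rightarrow> ('a \<Rightarrow> 'a) \<Rightarrow> real \<Rightarrow> bool" where
  "is_dgf X N \<omega> gw \<alpha> \<longleftrightarrow> 0 < \<alpha> \<and> convex_on X \<omega> \<and> continuous_on X \<omega>
     \<and> convex (dgf_dom X \<omega>)
     \<and> (\<forall>x\<in>dgf_dom X \<omega>. (\<omega> has_derivative (\<lambda>h. gw x \<bullet> h)) (at x within dgf_dom X \<omega>))
     \<and> continuous_on (dgf_dom X \<omega>) gw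
     \<and> (\<forall>x\<in>dgf_dom X \<omega>. \<forall>x'\<in>dgf_dom X \<omega>. (gw x' - gw x) \<bullet> (x' - x) \<ge> \<alpha> * (N (x' - x))\<^sup>2)"

definition bregman :: "('a::euclidean_space \<Rightarrow> real) \<Rightarrow> ('a \<Rightarrow> 'a) \<Rightarrow> 'a \<Rightarrow> 'a \<Rightarrow> real" where
  "bregman \<omega> gw x z = \<omega> z - \<omega> x - gw x \<bullet> (z - x)"

definition is_prox :: "'a::euclidean_space set \<Rightarrow> ('a \<Rightarrow> real) \<Rightarrow> ('a \<Rightarrow> 'a) \<Rightarrow> 'a \<Rightarrow> 'a \<Rightarrow> 'a \<Rightarrow> bool" where
  "is_prox X \<omega> gw x \<phi> z \<longleftrightarrow> z \<in> X \<and>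
     (\<forall>u\<in>X. \<phi> \<bullet> z + bregman \<omega> gw x z \<le> \<phi> \<bullet> u + bregman \<omega> gw x u)"

definition VI_sol :: "'a::euclidean_space set \<Rightarrow> ('a \<Rightarrow> 'a) \<Rightarrow> 'a set" where
  "VI_sol X F = {xs\<in>X. \<forall>x\<in>X. F xs \<bullet> (x - xs) \<ge> 0}"

end

theory Submission
  imports Defs
begin

text \<open>
  For a prox point \<open>z = P\<^sub>x(\<phi>)\<close> the optimality condition is the three-point inequality
  \<open>\<langle>\<phi>, z - u\<rangle> \<le> V(x, u) - V(z, u) - V(x, z)\<close> for all \<open>u \<in> X\<close>, i.e.
  \<open>\<langle>\<nabla>\<omega> z - (\<nabla>\<omega> x - \<phi>), u - z\<rangle> \<ge> 0\<close>. As \<open>\<omega>\<close> is differentiable only on \<open>X\<^sup>o\<close>, this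
  first-order condition is obtained for \<open>u \<in> X\<^sup>o\<close> by differentiating along segments, and then
  for all \<open>u \<in> X\<close> because \<open>X\<^sup>o\<close> is dense in \<open>X\<close>: minimisers of the regularisation
  \<open>\<omega> + \<parallel>\<cdot> - u\<parallel>\<^sup>2 / (2\<mu>)\<close> have a subgradient and tend to \<open>u\<close> as \<open>\<mu> \<rightarrow> 0\<close>.

  Adding the three-point inequalities for \<open>y\<^sub>k\<close> (at \<open>u = x\<^sub>k\<^sub>+\<^sub>1\<close>) and for \<open>x\<^sub>k\<^sub>+\<^sub>1\<close>
  (at \<open>u = x\<^sup>*\<close>), generalized monotonicity removes \<open>\<gamma>\<^sub>k \<langle>F(y\<^sub>k), y\<^sub>k - x\<^sup>*\<rangle> \<ge> 0\<close>, and the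
  error term \<open>\<gamma>\<^sub>k \<langle>F(x\<^sub>k) - F(y\<^sub>k), x\<^sub>k\<^sub>+\<^sub>1 - y\<^sub>k\<rangle>\<close> is absorbed by Young's inequality into the
  strong convexity bound \<open>V(y\<^sub>k, x\<^sub>k\<^sub>+\<^sub>1) \<ge> \<alpha>/2 \<parallel>x\<^sub>k\<^sub>+\<^sub>1 - y\<^sub>k\<parallel>\<^sup>2\<close>; this is (a). For (b),
  strong convexity once more gives \<open>\<parallel>x\<^sub>k - y\<^sub>k\<parallel>\<^sup>2 \<le> 2 V(x\<^sub>k, y\<^sub>k) / \<alpha>\<close>, which bounds the
  Hoelder estimate \<open>\<parallel>F(x\<^sub>k) - F(y\<^sub>k)\<parallel>\<^sub>*\<^sup>2 \<le> L\<^sup>2 \<parallel>x\<^sub>k - y\<^sub>k\<parallel>\<^sup>2\<^sup>\<nu>\<close>; the Lipschitz case is \<open>\<nu> = 1\<close>.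
\<close>

lemma convex_add_scaleR_diff_mem:
  assumes "convex S" "a \<in> S" "b \<in> S" "0 \<le> t" "t \<le> 1"
  shows "a + t *\<^sub>R (b - a) \<in> S"
proof -
  have "a + t *\<^sub>R (b - a) = (1 - t) *\<^sub>R a + t *\<^sub>R b" by (simp add: algebra_simps)
  with convexD_alt[OF assms] show ?thesis by simp
qed

lemma le_of_eventually_le_add_mult_at_right:
  fixes a b c :: real
  assumes "\<forall>\<^sub>F t in at_right 0. a \<le> b + t * c"
  shows "a \<le> b"
proof -
  have "((\<lambda>t. b + t * c) \<longlongrightarrow> b + 0 * c) (at_right 0)"
    by (intro tendsto_intros)
  then show ?thesis
    using tendsto_lowerbound assms trivial_limit_at_right_real by fastforce
qed

lemma power2_norm_add_scaleR:
  fixes a b :: "'a::real_inner"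
  shows "(norm (a + t *\<^sub>R b))\<^sup>2 = (norm a)\<^sup>2 + 2 * t * (a \<bullet> b) + t\<^sup>2 * (norm b)\<^sup>2"
  unfolding power2_norm_eq_inner
  by (simp add: inner_add_left inner_add_right inner_commute algebra_simps power2_eq_square)

lemma has_real_derivative_nonneg_at_left_min:
  fixes q :: "real \<Rightarrow> real"
  assumes "(q has_real_derivative D) (at 0 within {0..1})"
    and "\<And>s. s \<in> {0..1} \<Longrightarrow> q 0 \<le> q s"
  shows "0 \<le> D"
proof -
  have "((\<lambda>s. (q s - q 0) / (s - 0)) \<longlongrightarrow> D) (at_right 0)"
    using assms(1) unfolding has_field_derivative_iff by (simp add: at_within_Icc_at_right)
  moreover have "\<forall>\<^sub>F s in at_right 0. 0 \<le> (q s - q 0) / (s - 0)"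
    unfolding eventually_at_right_field
    by (rule exI[of _ 1]) (auto intro!: divide_nonneg_pos simp: assms(2))
  ultimately show ?thesis by (rule tendsto_lowerbound) simp
qed

lemma dgf_has_derivative_along_segment:
  assumes dgf: "is_dgf X N \<omega> gw \<alpha>" and a: "a \<in> dgf_dom X \<omega>" and b: "b \<in> dgf_dom X \<omega>"
    and t: "t \<in> {0..1}"
  shows "((\<lambda>s. \<omega> (a + s *\<^sub>R (b - a))) has_real_derivative gw (a + t *\<^sub>R (b - a)) \<bullet> (b - a))
           (at t within {0..1})"
proof -
  let ?p = "\<lambda>s::real. a + s *\<^sub>R (b - a)"
  have cvx: "convex (dgf_dom X \<omega>)" using dgf by (simp add: is_dgf_def)
  have seg: "?p ` {0..1} \<subseteq> dgf_dom X \<omega>"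
    using convex_add_scaleR_diff_mem[OF cvx a b] by auto
  with t have "?p t \<in> dgf_dom X \<omega>" by blast
  with dgf have "(\<omega> has_derivative (\<lambda>h. gw (?p t) \<bullet> h)) (at (?p t) within dgf_dom X \<omega>)"
    by (simp add: is_dgf_def)
  then have "(\<omega> has_derivative (\<lambda>h. gw (?p t) \<bullet> h)) (at (?p t) within ?p ` {0..1})"
    using seg by (rule has_derivative_subset)
  moreover have "(?p has_derivative (\<lambda>h. h *\<^sub>R (b - a))) (at t within {0..1})"
    by (auto intro!: derivative_eq_intros)
  ultimately have "((\<lambda>s. \<omega> (?p s)) has_derivative (\<lambda>h. gw (?p t) \<bullet> (h *\<^sub>R (b - a))))
      (at t within {0..1})"
    by (rule has_derivative_in_compose[rotated])
  moreover have "(\<lambda>h. gw (?p t) \<bullet> (h *\<^sub>R (b - a))) = (*) (gw (?p t) \<bullet> (b - a))"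
    by (auto simp: inner_scaleR_right)
  ultimately show ?thesis by (simp add: has_field_derivative_def)
qed

lemma dgf_subgradient_ineq_on_dom:
  assumes dgf: "is_dgf X N \<omega> gw \<alpha>" and z: "z \<in> dgf_dom X \<omega>" and g: "g \<in> subdiff X \<omega> z"
    and v: "v \<in> dgf_dom X \<omega>"
  shows "0 \<le> (gw z - g) \<bullet> (v - z)"
proof -
  let ?q = "\<lambda>s. \<omega> (z + s *\<^sub>R (v - z)) - s * (g \<bullet> (v - z))"
  have cvx: "convex (dgf_dom X \<omega>)" using dgf by (simp add: is_dgf_def)
  have "(?q has_real_derivative gw z \<bullet> (v - z) - g \<bullet> (v - z)) (at 0 within {0..1})"
    using dgf_has_derivative_along_segment[OF dgf z v, of 0]
    by (auto intro!: derivative_eq_intros)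
  moreover have "?q 0 \<le> ?q s" if "s \<in> {0..1}" for s
  proof -
    have "z + s *\<^sub>R (v - z) \<in> X"
      using convex_add_scaleR_diff_mem[OF cvx z v] that by (auto simp: dgf_dom_def)
    with g show ?thesis by (auto simp: subdiff_def inner_scaleR_right)
  qed
  ultimately have "0 \<le> gw z \<bullet> (v - z) - g \<bullet> (v - z)"
    by (rule has_real_derivative_nonneg_at_left_min)
  then show ?thesis by (simp add: inner_diff_left)
qed

lemma subdiff_of_local_prox_min:
  fixes X :: "'a::euclidean_space set"
  assumes cvo: "convex_on X \<omega>" and cvX: "convex X" and vX: "v \<in> X" and r: "0 < r" and \<mu>: "0 < \<mu>"
    and min: "\<And>w. w \<in> X \<Longrightarrow> dist w v < r \<Longrightarrow>
                 \<omega> v + (norm (v - u))\<^sup>2 / (2 * \<mu>) \<le> \<omega> w + (norm (w - u))\<^sup>2 / (2 * \<mu>)"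
  shows "(u - v) /\<^sub>R \<mu> \<in> subdiff X \<omega> v"
  unfolding subdiff_def
proof (intro CollectI ballI)
  fix w assume wX: "w \<in> X"
  define B where "B = (v - u) \<bullet> (w - v)"
  define C where "C = (norm (w - v))\<^sup>2"
  define \<delta> where "\<delta> = min 1 (r / (norm (w - v) + 1))"
  have "0 < \<delta>" using r by (auto simp: \<delta>_def intro!: divide_pos_pos add_nonneg_pos)
  have "\<omega> v \<le> \<omega> w + B / \<mu> + t * (C / (2 * \<mu>))" if t: "0 < t" "t < \<delta>" for t
  proof -
    define wt where "wt = v + t *\<^sub>R (w - v)"
    have "t \<le> 1" using t by (simp add: \<delta>_def)
    have wtX: "wt \<in> X" unfolding wt_def using convex_add_scaleR_diff_mem[OF cvX vX wX] t \<open>t \<le> 1\<close> by simp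
    have "t * norm (w - v) \<le> t * (norm (w - v) + 1)" using t by simp
    also have "\<dots> < r"
    proof -
      have "0 < norm (w - v) + 1" by (simp add: add_nonneg_pos)
      with t show ?thesis by (simp add: \<delta>_def less_divide_eq)
    qed
    finally have "dist wt v < r" using t by (simp add: wt_def dist_norm)
    with wtX have "\<omega> v + (norm (v - u))\<^sup>2 / (2 * \<mu>) \<le> \<omega> wt + (norm (wt - u))\<^sup>2 / (2 * \<mu>)"
      by (rule min)
    moreover have "\<omega> wt \<le> (1 - t) * \<omega> v + t * \<omega> w"
      using convex_onD[OF cvo, of t v w] t \<open>t \<le> 1\<close> vX wX by (simp add: wt_def algebra_simps)
    moreover have "(norm (wt - u))\<^sup>2 = (norm (v - u))\<^sup>2 + 2 * t * B + t\<^sup>2 * C"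
    proof -
      have "wt - u = (v - u) + t *\<^sub>R (w - v)" by (simp add: wt_def algebra_simps)
      then show ?thesis by (simp only: power2_norm_add_scaleR B_def C_def)
    qed
    ultimately have "t * \<omega> v \<le> t * \<omega> w + (2 * t * B + t\<^sup>2 * C) / (2 * \<mu>)"
      by (simp add: add_divide_distrib algebra_simps)
    also have "\<dots> = t * (\<omega> w + B / \<mu> + t * (C / (2 * \<mu>)))"
      using \<mu> by (simp add: field_simps power2_eq_square)
    finally show ?thesis using t by simp
  qed
  then have "\<forall>\<^sub>F t in at_right 0. \<omega> v \<le> \<omega> w + B / \<mu> + t * (C / (2 * \<mu>))"
    unfolding eventually_at_right_field using \<open>0 < \<delta>\<close> by blast
  then have "\<omega> v \<le> \<omega> w + B / \<mu>" by (rule le_of_eventually_le_add_mult_at_right)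
  moreover have "((u - v) /\<^sub>R \<mu>) \<bullet> (w - v) = - B / \<mu>"
    by (simp add: B_def inner_diff_left inner_diff_right divide_simps)
  ultimately show "\<omega> v + ((u - v) /\<^sub>R \<mu>) \<bullet> (w - v) \<le> \<omega> w" by simp
qed

lemma dgf_dom_dense:
  fixes X :: "'a::euclidean_space set"
  assumes cvo: "convex_on X \<omega>" and cont: "continuous_on X \<omega>" and cl: "closed X" and cvX: "convex X"
  shows "X \<subseteq> closure (dgf_dom X \<omega>)"
proof
  fix u assume u: "u \<in> X"
  show "u \<in> closure (dgf_dom X \<omega>)"
    unfolding closure_approachable
  proof (intro allI impI)
    fix e :: real assume e: "0 < e"
    define K where "K = X \<inter> cball u e"
    have K: "compact K" "u \<in> K" "K \<subseteq> X"
      using cl u e by (auto simp: K_def closed_Int_compact)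
    then have contK: "continuous_on K \<omega>" using cont continuous_on_subset by blast
    obtain v0 where v0: "\<forall>w\<in>K. \<omega> v0 \<le> \<omega> w"
      using continuous_attains_inf[OF K(1) _ contK] K(2) by blast
    define C where "C = \<omega> u - \<omega> v0"
    have "0 \<le> C" using v0 K(2) by (simp add: C_def)
    \<comment> \<open>\<open>\<mu>\<close> is so small that the regularised minimiser \<open>v\<close> stays within \<open>e/2\<close> of \<open>u\<close>,
      because \<open>\<parallel>v - u\<parallel>\<^sup>2 / (2\<mu>) \<le> \<omega> u - min\<^sub>K \<omega> = C\<close>\<close>
    define \<mu> where "\<mu> = e\<^sup>2 / (8 * (C + 1))"
    have "0 < \<mu>" using e \<open>0 \<le> C\<close> by (simp add: \<mu>_def)
    define \<Phi> where "\<Phi> w = \<omega> w + (norm (w - u))\<^sup>2 / (2 * \<mu>)" for w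
    have "continuous_on K \<Phi>"
      unfolding \<Phi>_def by (intro continuous_intros contK) (use \<open>0 < \<mu>\<close> in auto)
    then obtain v where v: "v \<in> K" "\<forall>w\<in>K. \<Phi> v \<le> \<Phi> w"
      using continuous_attains_inf[OF K(1)] K(2) by blast
    have "\<Phi> v \<le> \<Phi> u" "\<omega> v0 \<le> \<omega> v" using v v0 K(2) by auto
    then have "(norm (v - u))\<^sup>2 / (2 * \<mu>) \<le> C" by (simp add: \<Phi>_def C_def)
    then have "(norm (v - u))\<^sup>2 \<le> C * (2 * \<mu>)" using \<open>0 < \<mu>\<close> by (simp add: pos_divide_le_eq)
    also have "\<dots> = (e / 2)\<^sup>2 * (C / (C + 1))"
      using \<open>0 \<le> C\<close> by (simp add: \<mu>_def power2_eq_square field_simps)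
    also have "\<dots> < (e / 2)\<^sup>2" using \<open>0 \<le> C\<close> e by (simp add: divide_less_eq)
    finally have vu: "norm (v - u) < e / 2" by (rule power2_less_imp_less) (use e in simp)
    have "(u - v) /\<^sub>R \<mu> \<in> subdiff X \<omega> v"
    proof (rule subdiff_of_local_prox_min[OF cvo cvX _ _ \<open>0 < \<mu>\<close>])
      show "v \<in> X" using v K(3) by blast
      show "0 < e / 2" using e by simp
      fix w assume "w \<in> X" "dist w v < e / 2"
      with vu have "w \<in> K"
        unfolding K_def using dist_triangle[of u w v] by (simp add: dist_norm norm_minus_commute)
      then show "\<omega> v + (norm (v - u))\<^sup>2 / (2 * \<mu>) \<le> \<omega> w + (norm (w - u))\<^sup>2 / (2 * \<mu>)"
        using v(2) by (simp add: \<Phi>_def)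
    qed
    then have "v \<in> dgf_dom X \<omega>" using v K(3) by (auto simp: dgf_dom_def)
    moreover have "dist v u < e" using vu e by (simp add: dist_norm)
    ultimately show "\<exists>y\<in>dgf_dom X \<omega>. dist y u < e" by blast
  qed
qed

lemma dgf_subgradient_ineq:
  assumes dgf: "is_dgf X N \<omega> gw \<alpha>" and "closed X" "convex X"
    and z: "z \<in> dgf_dom X \<omega>" and g: "g \<in> subdiff X \<omega> z" and u: "u \<in> X"
  shows "0 \<le> (gw z - g) \<bullet> (u - z)"
proof -
  let ?H = "{w. (gw z - g) \<bullet> z \<le> (gw z - g) \<bullet> w}"
  have "dgf_dom X \<omega> \<subseteq> ?H"
    using dgf_subgradient_ineq_on_dom[OF dgf z g] by (auto simp: inner_diff_right)
  then have "closure (dgf_dom X \<omega>) \<subseteq> ?H" by (simp add: closure_minimal closed_halfspace_ge)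
  moreover have "u \<in> closure (dgf_dom X \<omega>)"
    using dgf_dom_dense[of X \<omega>] dgf assms(2,3) u unfolding is_dgf_def by blast
  ultimately show ?thesis by (auto simp: inner_diff_right)
qed

lemma prox_subdiff:
  assumes "is_prox X \<omega> gw x \<phi> z"
  shows "gw x - \<phi> \<in> subdiff X \<omega> z"
  unfolding subdiff_def
proof (intro CollectI ballI)
  fix w assume "w \<in> X"
  with assms have "\<phi> \<bullet> z + bregman \<omega> gw x z \<le> \<phi> \<bullet> w + bregman \<omega> gw x w"
    by (simp add: is_prox_def)
  then show "\<omega> z + (gw x - \<phi>) \<bullet> (w - z) \<le> \<omega> w"
    by (simp add: bregman_def inner_diff_left inner_diff_right)
qed

lemma prox_in_dgf_dom:
  assumes "is_prox X \<omega> gw x \<phi> z"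
  shows "z \<in> dgf_dom X \<omega>"
  using prox_subdiff[OF assms] assms by (auto simp: dgf_dom_def is_prox_def)

lemma prox_three_point:
  assumes dgf: "is_dgf X N \<omega> gw \<alpha>" and "closed X" "convex X"
    and prox: "is_prox X \<omega> gw x \<phi> z" and u: "u \<in> X"
  shows "\<phi> \<bullet> (z - u) \<le> bregman \<omega> gw x u - bregman \<omega> gw z u - bregman \<omega> gw x z"
  using dgf_subgradient_ineq[OF dgf assms(2,3) prox_in_dgf_dom[OF prox] prox_subdiff[OF prox] u]
  by (simp add: bregman_def inner_diff_left inner_diff_right)

lemma is_norm_nonneg:
  assumes "is_norm N"
  shows "0 \<le> N x"
  using assms unfolding is_norm_def by blast

lemma is_norm_zero:
  assumes "is_norm N"
  shows "N 0 = 0"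
  using assms unfolding is_norm_def by blast

lemma is_norm_minus_commute:
  assumes "is_norm N"
  shows "N (a - b) = N (b - a)"
proof -
  have "N ((- 1) *\<^sub>R (b - a)) = \<bar>- 1\<bar> * N (b - a)" using assms unfolding is_norm_def by blast
  then show ?thesis by simp
qed

lemma is_norm_ge_scaled_norm:
  fixes N :: "'a::euclidean_space \<Rightarrow> real"
  assumes nrm: "is_norm N"
  obtains c where "0 < c" "\<And>x. c * norm x \<le> N x"
proof -
  have hom: "N (c *\<^sub>R v) = \<bar>c\<bar> * N v" for c v using nrm by (simp add: is_norm_def)
  have "convex_on UNIV N"
    unfolding convex_on_def
  proof (intro conjI ballI allI impI)
    fix x y :: 'a and u v :: real assume "0 \<le> u" "0 \<le> v" "u + v = 1"
    moreover have "N (u *\<^sub>R x + v *\<^sub>R y) \<le> N (u *\<^sub>R x) + N (v *\<^sub>R y)"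
      using nrm unfolding is_norm_def by blast
    ultimately show "N (u *\<^sub>R x + v *\<^sub>R y) \<le> u * N x + v * N y" by (simp add: hom)
  qed simp
  then have "continuous_on UNIV N" by (rule convex_on_continuous[OF open_UNIV])
  moreover have "sphere (0::'a) 1 \<noteq> {}"
    using nonempty_Basis by (auto simp: dist_norm dest!: ex_in_conv[THEN iffD2] intro: norm_Basis)
  ultimately obtain m where m: "m \<in> sphere (0::'a) 1" "\<And>y. y \<in> sphere 0 1 \<Longrightarrow> N m \<le> N y"
    using continuous_attains_inf[OF compact_sphere] continuous_on_subset by (metis subset_UNIV)
  have "0 < N m" using nrm m(1) by (auto simp: is_norm_def less_le)
  moreover have "N m * norm x \<le> N x" for x
  proof (cases "x = 0")
    case False
    then have "N m \<le> N (x /\<^sub>R norm x)" by (intro m(2)) simp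
    also have "\<dots> = N x / norm x" by (simp add: hom divide_inverse_commute)
    finally show ?thesis using False by (simp add: field_simps)
  qed (simp add: is_norm_zero[OF nrm])
  ultimately show ?thesis by (rule that)
qed

lemma bdd_above_dual_norm_set:
  fixes N :: "'a::euclidean_space \<Rightarrow> real"
  assumes "is_norm N"
  shows "bdd_above {\<phi> \<bullet> x | x. N x \<le> 1}"
proof -
  obtain c where c: "0 < c" "\<And>x. c * norm x \<le> N x" using is_norm_ge_scaled_norm[OF assms] by blast
  show ?thesis
  proof (rule bdd_aboveI[where M = "norm \<phi> / c"])
    fix r assume "r \<in> {\<phi> \<bullet> x | x. N x \<le> 1}"
    then obtain x where x: "r = \<phi> \<bullet> x" "N x \<le> 1" by blast
    have "c * norm x \<le> 1" using c(2)[of x] x(2) by linarith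
    then have "norm x \<le> 1 / c" using c(1) by (simp add: le_divide_eq mult.commute)
    then have "norm \<phi> * norm x \<le> norm \<phi> * (1 / c)" by (rule mult_left_mono) simp
    then show "r \<le> norm \<phi> / c" using x(1) norm_cauchy_schwarz[of \<phi> x] by simp
  qed
qed

lemma dual_norm_nonneg:
  assumes "is_norm N"
  shows "0 \<le> dual_norm N \<phi>"
proof -
  have "0 \<in> {\<phi> \<bullet> x | x. N x \<le> 1}"
    using is_norm_zero[OF assms] by (auto intro!: exI[of _ 0])
  then show ?thesis unfolding dual_norm_def by (rule cSup_upper[OF _ bdd_above_dual_norm_set[OF assms]])
qed

lemma inner_le_dual_norm:
  assumes nrm: "is_norm N"
  shows "\<phi> \<bullet> v \<le> dual_norm N \<phi> * N v"
proof (cases "v = 0")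
  case True
  then show ?thesis by (simp add: is_norm_zero[OF nrm])
next
  case False
  with nrm have Nv: "0 < N v" unfolding is_norm_def by (metis less_le)
  have "N (v /\<^sub>R N v) = \<bar>inverse (N v)\<bar> * N v" using nrm unfolding is_norm_def by blast
  with Nv have "N (v /\<^sub>R N v) \<le> 1" by simp
  then have "\<phi> \<bullet> (v /\<^sub>R N v) \<le> dual_norm N \<phi>"
    unfolding dual_norm_def by (intro cSup_upper[OF _ bdd_above_dual_norm_set[OF nrm]]) blast
  then have "N v * (\<phi> \<bullet> (v /\<^sub>R N v)) \<le> N v * dual_norm N \<phi>"
    using Nv by (intro mult_left_mono) auto
  moreover have "N v * (\<phi> \<bullet> (v /\<^sub>R N v)) = \<phi> \<bullet> v" using Nv by simp
  ultimately show ?thesis by (metis mult.commute)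
qed

lemma bregman_ge_half_modulus:
  assumes dgf: "is_dgf X N \<omega> gw \<alpha>" and nrm: "is_norm N"
    and a: "a \<in> dgf_dom X \<omega>" and b: "b \<in> dgf_dom X \<omega>"
  shows "\<alpha> / 2 * (N (b - a))\<^sup>2 \<le> bregman \<omega> gw a b"
proof -
  define n where "n = N (b - a)"
  define c where "c = gw a \<bullet> (b - a)"
  define f where "f s = \<omega> (a + s *\<^sub>R (b - a)) - s * c - \<alpha> / 2 * s\<^sup>2 * n\<^sup>2" for s
  have cvx: "convex (dgf_dom X \<omega>)" using dgf by (simp add: is_dgf_def)
  have df: "(f has_real_derivative gw (a + t *\<^sub>R (b - a)) \<bullet> (b - a) - c - \<alpha> * t * n\<^sup>2)
      (at t within {0..1})" if "t \<in> {0..1}" for t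
    unfolding f_def using dgf_has_derivative_along_segment[OF dgf a b that]
    by (auto intro!: derivative_eq_intros simp: power2_eq_square)
  have "f 0 \<le> f 1"
  proof (rule DERIV_nonneg_imp_increasing_open[of 0 1])
    fix t :: real assume t: "0 < t" "t < 1"
    let ?p = "a + t *\<^sub>R (b - a)"
    have "?p \<in> dgf_dom X \<omega>" using convex_add_scaleR_diff_mem[OF cvx a b] t by simp
    with a dgf have "\<alpha> * (N (?p - a))\<^sup>2 \<le> (gw ?p - gw a) \<bullet> (?p - a)"
      unfolding is_dgf_def by blast
    then have "t * (t * (\<alpha> * n\<^sup>2)) \<le> t * ((gw ?p - gw a) \<bullet> (b - a))"
      using nrm t unfolding is_norm_def by (simp add: n_def power_mult_distrib power2_eq_square mult_ac)
    then have "0 \<le> gw ?p \<bullet> (b - a) - c - \<alpha> * t * n\<^sup>2"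
      using t by (simp add: c_def inner_diff_left mult_ac)
    moreover have "(f has_real_derivative gw ?p \<bullet> (b - a) - c - \<alpha> * t * n\<^sup>2) (at t)"
      using df[of t] t by (simp add: at_within_Icc_at)
    ultimately show "\<exists>y. (f has_real_derivative y) (at t) \<and> 0 \<le> y" by blast
  next
    show "continuous_on {0..1} f"
      unfolding continuous_on_eq_continuous_within using df DERIV_continuous by blast
  qed auto
  then show ?thesis by (simp add: f_def bregman_def c_def n_def)
qed

lemma extragradient_step:
  assumes dgf: "is_dgf X N \<omega> gw \<alpha>" and nrm: "is_norm N" and "closed X" "convex X"
    and genmono: "\<forall>xs\<in>VI_sol X F. \<forall>z\<in>X. F z \<bullet> (z - xs) \<ge> 0"
    and xs: "xs \<in> VI_sol X F" and \<gamma>: "0 < \<gamma>"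
    and py: "is_prox X \<omega> gw x (\<gamma> *\<^sub>R F x) y" and pz: "is_prox X \<omega> gw x (\<gamma> *\<^sub>R F y) z"
  shows "- (\<gamma>\<^sup>2 / (2 * \<alpha>)) * (dual_norm N (F x - F y))\<^sup>2 + bregman \<omega> gw x y
           \<le> bregman \<omega> gw x xs - bregman \<omega> gw z xs"
proof -
  have "0 < \<alpha>" using dgf by (simp add: is_dgf_def)
  have "xs \<in> X" using xs by (simp add: VI_sol_def)
  have "y \<in> X" "z \<in> X" using py pz by (auto simp: is_prox_def)
  define D where "D = dual_norm N (F x - F y)"
  define n where "n = N (z - y)"
  have tz: "(\<gamma> *\<^sub>R F y) \<bullet> (z - xs) \<le> bregman \<omega> gw x xs - bregman \<omega> gw z xs - bregman \<omega> gw x z"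
    using prox_three_point[OF dgf assms(3,4) pz \<open>xs \<in> X\<close>] .
  have ty: "(\<gamma> *\<^sub>R F x) \<bullet> (y - z) \<le> bregman \<omega> gw x z - bregman \<omega> gw y z - bregman \<omega> gw x y"
    using prox_three_point[OF dgf assms(3,4) py \<open>z \<in> X\<close>] .
  have "0 \<le> \<gamma> * (F y \<bullet> (y - xs))" using genmono xs \<open>y \<in> X\<close> \<gamma> by simp
  moreover have "\<gamma> * ((F x - F y) \<bullet> (z - y)) \<le> \<gamma> * (D * n)"
    using inner_le_dual_norm[OF nrm] \<gamma> by (simp add: D_def n_def)
  moreover have "\<alpha> / 2 * n\<^sup>2 \<le> bregman \<omega> gw y z"
    unfolding n_def using bregman_ge_half_modulus[OF dgf nrm prox_in_dgf_dom[OF py] prox_in_dgf_dom[OF pz]] .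
  moreover have young: "\<gamma> * (D * n) \<le> \<alpha> / 2 * n\<^sup>2 + \<gamma>\<^sup>2 / (2 * \<alpha>) * D\<^sup>2"
  proof -
    have "\<alpha> / 2 * n\<^sup>2 + \<gamma>\<^sup>2 / (2 * \<alpha>) * D\<^sup>2 - \<gamma> * (D * n) = (\<alpha> * n - \<gamma> * D)\<^sup>2 / (2 * \<alpha>)"
      using \<open>0 < \<alpha>\<close> by (simp add: field_simps power2_eq_square)
    also have "\<dots> \<ge> 0" using \<open>0 < \<alpha>\<close> by simp
    finally show ?thesis by simp
  qed
  ultimately show ?thesis
    using tz ty unfolding D_def[symmetric]
    by (simp add: inner_diff_left inner_diff_right algebra_simps)
qed

lemma holder_error_bound:
  fixes \<alpha> \<gamma> L \<nu> D m V :: real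
  assumes \<alpha>: "0 < \<alpha>" and \<nu>: "0 \<le> \<nu>" and "0 \<le> D" "0 \<le> m"
    and holder: "D \<le> L * m powr \<nu>" and V: "\<alpha> / 2 * m\<^sup>2 \<le> V"
  shows "\<gamma>\<^sup>2 / (2 * \<alpha>) * D\<^sup>2 \<le> 2 powr (\<nu> - 1) * L\<^sup>2 * \<gamma>\<^sup>2 * \<alpha> powr (- (1 + \<nu>)) * V powr \<nu>"
proof -
  have "0 \<le> \<alpha> / 2 * m\<^sup>2" using \<alpha> by simp
  with V have "0 \<le> V" by linarith
  have "m * m = (\<alpha> / 2 * m\<^sup>2) * (2 / \<alpha>)" using \<alpha> by (simp add: power2_eq_square)
  also have "\<dots> \<le> V * (2 / \<alpha>)" using V \<alpha> by (intro mult_right_mono) auto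
  finally have mm: "m * m \<le> 2 * V / \<alpha>" by (simp add: mult.commute)
  have "D\<^sup>2 \<le> (L * m powr \<nu>)\<^sup>2" using \<open>0 \<le> D\<close> holder by (simp add: power_mono)
  also have "\<dots> = L\<^sup>2 * (m * m) powr \<nu>"
    using \<open>0 \<le> m\<close> by (simp add: powr_mult power2_eq_square mult_ac)
  also have "\<dots> \<le> L\<^sup>2 * (2 * V / \<alpha>) powr \<nu>"
    using mm \<nu> \<open>0 \<le> m\<close> by (intro mult_left_mono powr_mono2) auto
  also have "\<dots> = L\<^sup>2 * (2 powr \<nu> * V powr \<nu> / \<alpha> powr \<nu>)"
    using \<open>0 \<le> V\<close> \<alpha> by (simp add: powr_divide powr_mult)
  finally have "\<gamma>\<^sup>2 / (2 * \<alpha>) * D\<^sup>2 \<le> \<gamma>\<^sup>2 / (2 * \<alpha>) * (L\<^sup>2 * (2 powr \<nu> * V powr \<nu> / \<alpha> powr \<nu>))"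
    using \<alpha> by (intro mult_left_mono) auto
  also have "\<dots> = 2 powr \<nu> / 2 * L\<^sup>2 * \<gamma>\<^sup>2 * (1 / (\<alpha> * \<alpha> powr \<nu>)) * V powr \<nu>"
    using \<alpha> by (simp add: field_simps)
  also have "\<dots> = 2 powr (\<nu> - 1) * L\<^sup>2 * \<gamma>\<^sup>2 * \<alpha> powr (- (1 + \<nu>)) * V powr \<nu>"
  proof -
    have "\<alpha> powr (- (1 + \<nu>)) = inverse (\<alpha> powr (1 + \<nu>))" by (rule powr_minus)
    also have "\<alpha> powr (1 + \<nu>) = \<alpha> * \<alpha> powr \<nu>" using \<alpha> by (simp add: powr_add)
    finally have "\<alpha> powr (- (1 + \<nu>)) = 1 / (\<alpha> * \<alpha> powr \<nu>)" by (simp add: divide_inverse)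
    moreover have "2 powr (\<nu> - 1) = 2 powr \<nu> / 2" by (simp add: powr_diff)
    ultimately show ?thesis by (simp only:)
  qed
  finally show ?thesis .
qed

lemma extragradient_step_holder:
  assumes dgf: "is_dgf X N \<omega> gw \<alpha>" and nrm: "is_norm N" and "closed X" "convex X"
    and "\<forall>xs\<in>VI_sol X F. \<forall>z\<in>X. F z \<bullet> (z - xs) \<ge> 0"
    and "xs \<in> VI_sol X F" and "0 < \<gamma>" and x: "x \<in> dgf_dom X \<omega>"
    and py: "is_prox X \<omega> gw x (\<gamma> *\<^sub>R F x) y" and pz: "is_prox X \<omega> gw x (\<gamma> *\<^sub>R F y) z"
    and \<nu>: "0 \<le> \<nu>" and holder: "dual_norm N (F x - F y) \<le> L * N (x - y) powr \<nu>"
  shows "bregman \<omega> gw x y - 2 powr (\<nu> - 1) * L\<^sup>2 * \<gamma>\<^sup>2 * \<alpha> powr (- (1 + \<nu>)) * bregman \<omega> gw x y powr \<nu>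
           \<le> bregman \<omega> gw x xs - bregman \<omega> gw z xs"
proof -
  have "\<alpha> / 2 * (N (x - y))\<^sup>2 \<le> bregman \<omega> gw x y"
    using bregman_ge_half_modulus[OF dgf nrm x prox_in_dgf_dom[OF py]] is_norm_minus_commute[OF nrm]
    by simp
  then have "\<gamma>\<^sup>2 / (2 * \<alpha>) * (dual_norm N (F x - F y))\<^sup>2
      \<le> 2 powr (\<nu> - 1) * L\<^sup>2 * \<gamma>\<^sup>2 * \<alpha> powr (- (1 + \<nu>)) * bregman \<omega> gw x y powr \<nu>"
    using dgf \<nu> holder dual_norm_nonneg[OF nrm] is_norm_nonneg[OF nrm]
    by (intro holder_error_bound) (auto simp: is_dgf_def)
  with extragradient_step[OF assms(1-7) py pz] show ?thesis by linarith
qed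

lemma extragradient_step_lipschitz:
  assumes dgf: "is_dgf X N \<omega> gw \<alpha>" and nrm: "is_norm N" and "closed X" "convex X"
    and "\<forall>xs\<in>VI_sol X F. \<forall>z\<in>X. F z \<bullet> (z - xs) \<ge> 0"
    and "xs \<in> VI_sol X F" and "0 < \<gamma>" and x: "x \<in> dgf_dom X \<omega>"
    and py: "is_prox X \<omega> gw x (\<gamma> *\<^sub>R F x) y" and "is_prox X \<omega> gw x (\<gamma> *\<^sub>R F y) z"
    and lipschitz: "dual_norm N (F x - F y) \<le> L * N (x - y)"
  shows "(1 - L\<^sup>2 * \<gamma>\<^sup>2 / \<alpha>\<^sup>2) * bregman \<omega> gw x y \<le> bregman \<omega> gw x xs - bregman \<omega> gw z xs"
proof -
  have "0 < \<alpha>" using dgf by (simp add: is_dgf_def)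
  have "0 \<le> \<alpha> / 2 * (N (y - x))\<^sup>2" using \<open>0 < \<alpha>\<close> by simp
  also have "\<dots> \<le> bregman \<omega> gw x y"
    using bregman_ge_half_modulus[OF dgf nrm x prox_in_dgf_dom[OF py]] .
  finally have "bregman \<omega> gw x y powr 1 = bregman \<omega> gw x y" by simp
  moreover have "\<alpha> powr (- (1 + 1)) = 1 / \<alpha>\<^sup>2"
    using \<open>0 < \<alpha>\<close> by (simp add: powr_minus powr_numeral divide_inverse)
  moreover have "dual_norm N (F x - F y) \<le> L * N (x - y) powr 1"
    using lipschitz is_norm_nonneg[OF nrm] by simp
  ultimately show ?thesis
    using extragradient_step_holder[OF assms(1-10), of 1 L] by (simp add: algebra_simps)
qed

theorem lemma5:
  fixes X :: "'a::euclidean_space set" and F :: "'a \<Rightarrow> 'a"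
    and N :: "'a \<Rightarrow> real" and \<omega> :: "'a \<Rightarrow> real" and gw :: "'a \<Rightarrow> 'a" and \<alpha> :: real
    and \<gamma> :: "nat \<Rightarrow> real" and x y :: "nat \<Rightarrow> 'a"
  assumes norm: "is_norm N"
    and X: "X \<noteq> {}" "closed X" "convex X"
    and Fcont: "continuous_on X F"
    and sol_ne: "VI_sol X F \<noteq> {}"
    and genmono: "\<forall>xs\<in>VI_sol X F. \<forall>z\<in>X. F z \<bullet> (z - xs) \<ge> 0"
    and dgf: "is_dgf X N \<omega> gw \<alpha>"
    and x1: "x 1 \<in> dgf_dom X \<omega>"
    and step: "\<forall>k\<ge>1. \<gamma> k > 0"
    and yk: "\<forall>k\<ge>1. is_prox X \<omega> gw (x k) (\<gamma> k *\<^sub>R F (x k)) (y k)"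
    and xk: "\<forall>k\<ge>1. is_prox X \<omega> gw (x k) (\<gamma> k *\<^sub>R F (y k)) (x (Suc k))"
  shows "(\<exists>xs\<in>VI_sol X F. \<forall>k\<ge>1.
            - ((\<gamma> k)\<^sup>2 / (2 * \<alpha>)) * (dual_norm N (F (x k) - F (y k)))\<^sup>2
              + bregman \<omega> gw (x k) (y k)
            \<le> bregman \<omega> gw (x k) xs - bregman \<omega> gw (x (Suc k)) xs)
      \<and> (\<forall>L \<nu>. L > 0 \<and> 0 < \<nu> \<and> \<nu> \<le> 1 \<and>
            (\<forall>u\<in>X. \<forall>v\<in>X. dual_norm N (F u - F v) \<le> L * N (u - v) powr \<nu>) \<longrightarrow>
          (\<exists>xs\<in>VI_sol X F. \<forall>k\<ge>1.
            bregman \<omega> gw (x k) (y k)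
              - 2 powr (\<nu> - 1) * L\<^sup>2 * (\<gamma> k)\<^sup>2 * \<alpha> powr (- (1 + \<nu>))
                * (bregman \<omega> gw (x k) (y k)) powr \<nu>
            \<le> bregman \<omega> gw (x k) xs - bregman \<omega> gw (x (Suc k)) xs))
      \<and> (\<forall>L. L > 0 \<and> (\<forall>u\<in>X. \<forall>v\<in>X. dual_norm N (F u - F v) \<le> L * N (u - v)) \<longrightarrow>
          (\<exists>xs\<in>VI_sol X F. \<forall>k\<ge>1.
            (1 - L\<^sup>2 * (\<gamma> k)\<^sup>2 / \<alpha>\<^sup>2) * bregman \<omega> gw (x k) (y k)
            \<le> bregman \<omega> gw (x k) xs - bregman \<omega> gw (x (Suc k)) xs))"
proof -
  obtain xs where xs: "xs \<in> VI_sol X F" using sol_ne by blast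
  have x_dom: "x k \<in> dgf_dom X \<omega>" if "1 \<le> k" for k
  proof (cases "k = 1")
    case False
    with that obtain j where "k = Suc j" "1 \<le> j" by (cases k) auto
    with xk show ?thesis by (metis prox_in_dgf_dom)
  qed (use x1 in simp)
  have xy_X: "x k \<in> X" "y k \<in> X" if "1 \<le> k" for k
    using x_dom[OF that] yk that by (auto simp: dgf_dom_def is_prox_def)
  show ?thesis
    apply (intro conjI allI impI bexI[OF _ xs])
    subgoal for k
      using extragradient_step[OF dgf norm X(2,3) genmono xs] step yk xk by blast
    subgoal for L \<nu> k
      using extragradient_step_holder[OF dgf norm X(2,3) genmono xs] step yk xk x_dom xy_X
      by (metis less_imp_le)
    subgoal for L k
      using extragradient_step_lipschitz[OF dgf norm X(2,3) genmono xs] step yk xk x_dom xy_X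
      by metis
    done
qed

end
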